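(* Let $\mathbb{H}\in\mathbb{C}^{t\times r}$ be a random matrix with $\mathbb{E}[\|\mathbb{H}\|_F^2]<\infty$ whose distribution is absolutely continuous with respect to Lebesgue measure on $\mathbb{C}^{t\times r}$, and let $\rho>0$. Then for every $R\in\mathbb{R}_+$ the infimum $$\inf_{Q\in\mathcal{U}_t}\Pr\big[\log\det(I_r+\mathbb{H}^HQ\mathbb{H})<R\big]$$ is attained, i.e., it is a minimum.
   Context: $\mathcal{U}_t=\{Q\in\mathbb{C}^{t\times t}:Q\succeq0,\ \operatorname{tr}Q\le\rho\}$; $\|A\|_F=\sqrt{\operatorname{tr}(AA^H)}$. *)

theory Defs
  imports "HOL-Analysis.Analysis" "HOL-Probability.Probability"
begin

text \<open>Complex matrices are represented as \<open>complex^'c^'r\<close> (rows indexed by \<open>'r\<close>,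
  columns by \<open>'c\<close>); dimensions are finite index types.\<close>

definition conj_transpose :: "complex^'c^'r \<Rightarrow> complex^'r^'c" where
  "conj_transpose A = (\<chi> i j. cnj (A $ j $ i))"

definition frob_norm :: "complex^'c^'r \<Rightarrow> real" where
  "frob_norm A = sqrt (Re (trace (A ** conj_transpose A)))"

definition quad_form :: "complex^'n^'n \<Rightarrow> complex^'n \<Rightarrow> complex" where
  "quad_form Q x = (\<Sum>i\<in>UNIV. \<Sum>j\<in>UNIV. cnj (x $ i) * Q $ i $ j * x $ j)"

definition psd :: "complex^'n^'n \<Rightarrow> bool" where
  "psd Q \<longleftrightarrow> conj_transpose Q = Q \<and> (\<forall>x. 0 \<le> Re (quad_form Q x))"

text \<open>The constraint set \<open>U_t = {Q \<succeq> 0, tr Q \<le> \<rho>}\<close> (the trace of a Hermitian matrix is real).\<close>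
definition U_set :: "real \<Rightarrow> (complex^'t^'t) set" where
  "U_set \<rho> = {Q. psd Q \<and> Re (trace Q) \<le> \<rho>}"

text \<open>\<open>log det (I_r + H^H Q H)\<close>; the determinant is real (and \<open>\<ge> 1\<close>) for \<open>Q \<succeq> 0\<close>.\<close>
definition logdet_rate :: "complex^'r^'t \<Rightarrow> complex^'t^'t \<Rightarrow> real" where
  "logdet_rate H Q = ln (Re (det (mat 1 + conj_transpose H ** Q ** H)))"

end

theory Submission
  imports Defs
begin

text \<open>The set \<open>U_t\<close> is compact, and for every fixed channel realisation the event
  \<open>log det (I + H\<^sup>H Q H) < R\<close> is an open condition on \<open>Q\<close>. Hence along any convergent sequence
  \<open>Q\<^sub>n \<rightarrow> Q\<close> the event for \<open>Q\<close> is contained in the \<open>lim inf\<close> of the events for \<open>Q\<^sub>n\<close>, and continuity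
  of the probability measure from below makes \<open>Q \<mapsto> P[log det (I + H\<^sup>H Q H) < R]\<close> sequentially
  lower semicontinuous. A lower semicontinuous function on a nonempty compact set attains its
  infimum: take a minimising sequence and a convergent subsequence.\<close>

lemma if_zero_mult: "(if P then a else 0) * b = (if P then a * b else (0::'a::mult_zero))"
  by simp

lemma mult_if_zero: "b * (if P then a else 0) = (if P then b * a else (0::'a::mult_zero))"
  by simp

lemma cnj_if_zero: "cnj (if P then c else 0) = (if P then cnj c else 0)"
  by simp

lemma quad_form_unit_vector: "quad_form Q (\<chi> k. if k = i then 1 else 0) = Q $ i $ i"
  unfolding quad_form_def by (simp add: if_zero_mult mult_if_zero cnj_if_zero)

lemma quad_form_two_entries:
  assumes "i \<noteq> j"
  shows "quad_form Q (\<chi> k. if k = i then 1 else if k = j then c else 0) =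
     Q$i$i + Q$i$j * c + cnj c * Q$j$i + cnj c * c * Q$j$j"
proof -
  have "(\<chi> k. if k = i then 1 else if k = j then c else 0) $ k =
      (if k = i then 1 else 0) + (if k = j then c else 0)" for k
    using assms by auto
  then show ?thesis
    unfolding quad_form_def using assms
    by (simp add: distrib_left distrib_right sum.distrib if_zero_mult mult_if_zero cnj_if_zero mult.assoc)
qed

lemma conj_transpose_nth: "conj_transpose A $ i $ j = cnj (A $ j $ i)"
  by (simp add: conj_transpose_def)

lemma conj_transpose_eq_self_entry:
  assumes "conj_transpose Q = Q"
  shows "Q $ j $ i = cnj (Q $ i $ j)"
  using conj_transpose_nth[of Q j i] by (simp add: assms)

lemma psd_diag_nonneg:
  assumes "psd Q"
  shows "0 \<le> Re (Q $ i $ i)"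
proof -
  have "0 \<le> Re (quad_form Q (\<chi> k. if k = i then 1 else 0))"
    using assms unfolding psd_def by blast
  then show ?thesis by (simp only: quad_form_unit_vector)
qed

lemma psd_diag_le_trace:
  assumes "psd Q"
  shows "Re (Q $ i $ i) \<le> Re (trace Q)"
proof -
  have "Re (Q $ i $ i) \<le> (\<Sum>k\<in>UNIV. Re (Q $ k $ k))"
    by (rule member_le_sum) (auto simp: psd_diag_nonneg[OF assms])
  also have "\<dots> = Re (trace Q)" by (simp add: trace_def)
  finally show ?thesis .
qed

lemma psd_entry_bound:
  assumes "psd Q"
  shows "cmod (Q $ i $ j) \<le> Re (Q $ i $ i) + Re (Q $ j $ j)"
proof -
  have herm: "conj_transpose Q = Q" and nonneg: "\<And>x. 0 \<le> Re (quad_form Q x)"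
    using assms by (auto simp: psd_def)
  show ?thesis
  proof (cases "i = j")
    case True
    have "Im (Q $ i $ i) = 0"
      using conj_transpose_eq_self_entry[OF herm, of i i] by (metis cnj.sel(2) neg_equal_zero)
    then show ?thesis
      using True psd_diag_nonneg[OF assms, of i] by (simp add: cmod_def)
  next
    case False
    have Qji: "Q $ j $ i = cnj (Q $ i $ j)"
      by (rule conj_transpose_eq_self_entry[OF herm])
    have q: "0 \<le> Re (Q$i$i + Q$i$j * c + cnj c * Q$j$i + cnj c * c * Q$j$j)" for c
      using nonneg[of "\<chi> k. if k = i then 1 else if k = j then c else 0"] quad_form_two_entries[OF False]
      by simp
    \<comment> \<open>test vectors \<open>e\<^sub>i + c e\<^sub>j\<close> with \<open>c = \<plusminus>1, \<plusminus>\<i>\<close>\<close>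
    have "0 \<le> Re (Q$i$i) + 2 * Re (Q$i$j) + Re (Q$j$j)" using q[of 1] Qji by simp
    moreover have "0 \<le> Re (Q$i$i) - 2 * Re (Q$i$j) + Re (Q$j$j)" using q[of "-1"] Qji by simp
    moreover have "0 \<le> Re (Q$i$i) - 2 * Im (Q$i$j) + Re (Q$j$j)" using q[of "\<i>"] Qji by simp
    moreover have "0 \<le> Re (Q$i$i) + 2 * Im (Q$i$j) + Re (Q$j$j)" using q[of "-\<i>"] Qji by simp
    ultimately show ?thesis
      using cmod_le[of "Q $ i $ j"] by linarith
  qed
qed

lemma U_set_entry_bound: "Q \<in> U_set \<rho> \<Longrightarrow> cmod (Q $ i $ j) \<le> 2 * \<rho>"
  using psd_entry_bound[of Q i j] psd_diag_le_trace[of Q i] psd_diag_le_trace[of Q j]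
  by (auto simp: U_set_def)

lemma continuous_on_conj_transpose [continuous_intros]:
  "continuous_on S f \<Longrightarrow> continuous_on S (\<lambda>x. conj_transpose (f x))"
  unfolding conj_transpose_def by (intro continuous_intros)

lemma continuous_on_matrix_mult [continuous_intros]:
  fixes f :: "_ \<Rightarrow> complex^'n^'m" and g :: "_ \<Rightarrow> complex^'k^'n"
  shows "continuous_on S f \<Longrightarrow> continuous_on S g \<Longrightarrow> continuous_on S (\<lambda>x. f x ** g x)"
  unfolding matrix_matrix_mult_def by (intro continuous_intros)

lemma continuous_on_det [continuous_intros]:
  fixes f :: "_ \<Rightarrow> complex^'n^'n"
  shows "continuous_on S f \<Longrightarrow> continuous_on S (\<lambda>x. det (f x))"
  unfolding det_def by (intro continuous_intros)

lemma closed_U_set: "closed (U_set \<rho> :: (complex^'t^'t) set)"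
proof -
  have "U_set \<rho> = {Q::complex^'t^'t. conj_transpose Q = Q} \<inter> (\<Inter>x. {Q. 0 \<le> Re (quad_form Q x)})
      \<inter> {Q. Re (trace Q) \<le> \<rho>}"
    by (auto simp: U_set_def psd_def)
  also have "closed \<dots>"
    unfolding quad_form_def trace_def
    by (intro closed_Int closed_INT ballI closed_Collect_eq closed_Collect_le continuous_intros)
  finally show ?thesis .
qed

lemma bounded_U_set: "bounded (U_set \<rho> :: (complex^'t^'t) set)"
proof -
  have "norm Q \<le> CARD('t) * CARD('t) * (2 * \<rho>)" if "Q \<in> U_set \<rho>" for Q :: "complex^'t^'t"
  proof -
    have "norm Q \<le> (\<Sum>i\<in>UNIV. norm (Q $ i))"
      unfolding norm_vec_def by (rule L2_set_le_sum) auto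
    also have "\<dots> \<le> (\<Sum>i\<in>UNIV. \<Sum>j\<in>UNIV. norm (Q $ i $ j))"
      by (intro sum_mono) (unfold norm_vec_def, rule L2_set_le_sum, auto)
    also have "\<dots> \<le> (\<Sum>i\<in>(UNIV::'t set). \<Sum>j\<in>(UNIV::'t set). 2 * \<rho>)"
      using U_set_entry_bound[OF that] by (intro sum_mono) auto
    finally show ?thesis by simp
  qed
  then show ?thesis unfolding bounded_iff by blast
qed

lemma compact_U_set: "compact (U_set \<rho> :: (complex^'t^'t) set)"
  using closed_U_set bounded_U_set compact_eq_bounded_closed by blast

lemma zero_in_U_set: "0 \<le> \<rho> \<Longrightarrow> 0 \<in> U_set \<rho>"
  by (simp add: U_set_def psd_def quad_form_def conj_transpose_def trace_def vec_eq_iff)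

lemma compact_attains_Inf_if_seq_lsc:
  fixes f :: "'a::first_countable_topology \<Rightarrow> real"
  assumes "compact K" "K \<noteq> {}" "bdd_below (f ` K)"
    and lsc: "\<And>xs l m. (\<And>n. xs n \<in> K) \<Longrightarrow> xs \<longlonglongrightarrow> l \<Longrightarrow> (\<lambda>n. f (xs n)) \<longlonglongrightarrow> m \<Longrightarrow> f l \<le> m"
  shows "\<exists>x\<in>K. f x = (INF x\<in>K. f x)"
proof -
  define m where "m = (INF x\<in>K. f x)"
  have lower: "m \<le> f x" if "x \<in> K" for x
    unfolding m_def by (rule cINF_lower[OF assms(3) that])
  have "\<exists>x\<in>K. f x < m + 1 / Suc n" for n :: nat
    using cINF_less_iff[OF assms(2,3), of "m + 1 / Suc n"] by (simp add: m_def)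
  then obtain xs where xs: "\<And>n. xs n \<in> K" "\<And>n. f (xs n) < m + 1 / Suc n"
    by metis
  have "(\<lambda>n. f (xs n)) \<longlonglongrightarrow> m"
  proof (rule tendsto_sandwich[of "\<lambda>n. m" _ _ "\<lambda>n. m + 1 / Suc n"])
    show "(\<lambda>n. m + 1 / Suc n) \<longlonglongrightarrow> m"
      using tendsto_add[OF tendsto_const LIMSEQ_inverse_real_of_nat] by (simp add: inverse_eq_divide)
    show "\<forall>\<^sub>F n in sequentially. m \<le> f (xs n)"
      using lower xs(1) by simp
    show "\<forall>\<^sub>F n in sequentially. f (xs n) \<le> m + 1 / Suc n"
      using xs(2) by (simp add: less_imp_le)
  qed simp
  moreover obtain l r where "l \<in> K" "strict_mono r" "(xs \<circ> r) \<longlonglongrightarrow> l"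
    using compact_imp_seq_compact[OF assms(1)] xs(1) seq_compactE by metis
  ultimately have "f l \<le> m"
    using lsc[of "xs \<circ> r" l m] LIMSEQ_subseq_LIMSEQ xs(1) by (auto simp: o_def)
  with lower[OF \<open>l \<in> K\<close>] \<open>l \<in> K\<close> show ?thesis
    unfolding m_def by (intro bexI[of _ l] antisym) simp_all
qed

lemma (in finite_measure) measure_le_lim_if_eventually_mem:
  assumes "A \<in> sets M" "\<And>n. B n \<in> sets M"
    and "\<And>\<omega>. \<omega> \<in> A \<Longrightarrow> eventually (\<lambda>n. \<omega> \<in> B n) sequentially"
    and "(\<lambda>n. measure M (B n)) \<longlonglongrightarrow> m"
  shows "measure M A \<le> m"
proof -
  define C where "C N = A \<inter> (\<Inter>k. B (N + k))" for N
  have C_sets: "C N \<in> sets M" for N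
    unfolding C_def using assms(1,2) by auto
  have "incseq C"
    by (rule incseq_SucI) (auto simp: C_def, metis add_Suc_right)
  moreover have "(\<Union>N. C N) = A"
  proof (intro equalityI subsetI)
    fix \<omega> assume "\<omega> \<in> A"
    then obtain N where "\<forall>n\<ge>N. \<omega> \<in> B n"
      using assms(3) unfolding eventually_sequentially by blast
    with \<open>\<omega> \<in> A\<close> have "\<omega> \<in> C N" by (simp add: C_def)
    then show "\<omega> \<in> (\<Union>N. C N)" by blast
  qed (auto simp: C_def)
  ultimately have lim: "(\<lambda>N. measure M (C N)) \<longlonglongrightarrow> measure M A"
    using finite_Lim_measure_incseq[of C] C_sets by auto
  have "measure M (C N) \<le> m" for N
  proof (rule LIMSEQ_le_const[OF assms(4)], intro exI allI impI)
    fix n assume "N \<le> n"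
    then have "C N \<subseteq> B n" unfolding C_def by clarsimp (metis le_add_diff_inverse)
    then show "measure M (C N) \<le> measure M (B n)" by (rule finite_measure_mono) (rule assms(2))
  qed
  then show ?thesis by (intro LIMSEQ_le_const2[OF lim]) auto
qed

lemma (in finite_measure) measure_preimage_open_seq_lsc:
  fixes g :: "'a \<Rightarrow> 'b::topological_space \<Rightarrow> 'c::topological_space"
  assumes "\<And>\<omega>. \<omega> \<in> space M \<Longrightarrow> continuous_on UNIV (g \<omega>)" "open V"
    and "\<And>x. {\<omega>\<in>space M. g \<omega> x \<in> V} \<in> sets M"
    and "xs \<longlonglongrightarrow> l" "(\<lambda>n. measure M {\<omega>\<in>space M. g \<omega> (xs n) \<in> V}) \<longlonglongrightarrow> m"
  shows "measure M {\<omega>\<in>space M. g \<omega> l \<in> V} \<le> m"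
proof (rule measure_le_lim_if_eventually_mem[where B = "\<lambda>n. {\<omega>\<in>space M. g \<omega> (xs n) \<in> V}"])
  show "(\<lambda>n. measure M {\<omega>\<in>space M. g \<omega> (xs n) \<in> V}) \<longlonglongrightarrow> m"
    by (fact assms(5))
next
  fix \<omega> assume \<omega>: "\<omega> \<in> {\<omega>\<in>space M. g \<omega> l \<in> V}"
  then have "continuous_on UNIV (g \<omega>)"
    using assms(1) by simp
  then have "(\<lambda>n. g \<omega> (xs n)) \<longlonglongrightarrow> g \<omega> l"
    using continuous_on_tendsto_compose[OF _ assms(4), of UNIV "g \<omega>"] by simp
  then have "eventually (\<lambda>n. g \<omega> (xs n) \<in> V) sequentially"
    using \<omega> by (intro topological_tendstoD[OF _ assms(2)]) auto
  then show "eventually (\<lambda>n. \<omega> \<in> {\<omega>\<in>space M. g \<omega> (xs n) \<in> V}) sequentially"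
    by eventually_elim (use \<omega> in auto)
qed (use assms(3) in auto)

lemma open_ln_less: "open {x::real. ln x < R}"
proof -
  \<comment> \<open>\<open>ln\<close> is even and \<open>ln 0 = 0\<close>, so this set is \<open>|x| < exp R\<close>, minus \<open>0\<close> when \<open>R \<le> 0\<close>\<close>
  have "ln x < R \<longleftrightarrow> \<bar>x\<bar> < exp R \<and> (0 < R \<or> x \<noteq> 0)" for x
    by (cases "x = 0") (auto simp: abs_raw_ln[symmetric] ln_less_cancel_iff[symmetric])
  then have "{x::real. ln x < R} = {x. \<bar>x\<bar> < exp R} \<inter> {x. 0 < R \<or> x \<noteq> 0}"
    by auto
  also have "open \<dots>"
    by (cases "0 < R") (auto intro!: open_Collect_less open_Collect_neq continuous_on_rabs continuous_on_id continuous_on_const)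
  finally show ?thesis .
qed

lemma logdet_rate_less_iff:
  "logdet_rate H Q < R \<longleftrightarrow> Re (det (mat 1 + conj_transpose H ** Q ** H)) \<in> {x. ln x < R}"
  by (simp add: logdet_rate_def)

lemma measurable_logdet_rate_less:
  fixes H :: "'a \<Rightarrow> complex^'r^'t" and Q :: "complex^'t^'t"
  assumes "H \<in> borel_measurable M"
  shows "{\<omega>\<in>space M. logdet_rate (H \<omega>) Q < R} \<in> sets M"
proof -
  have "(\<lambda>X. Re (det (mat 1 + conj_transpose (X::complex^'r^'t) ** Q ** X))) \<in> borel_measurable borel"
    by (intro borel_measurable_continuous_onI continuous_intros)
  then have "(\<lambda>\<omega>. Re (det (mat 1 + conj_transpose (H \<omega>) ** Q ** H \<omega>))) \<in> borel_measurable M"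
    using assms by (rule measurable_compose[rotated])
  then show ?thesis unfolding logdet_rate_def by measurable
qed

theorem proposition1:
  fixes M :: "'a measure" and H :: "'a \<Rightarrow> complex^'r^'t" and \<rho> :: real
  assumes "prob_space M"
    and "H \<in> borel_measurable M"
    and "(\<integral>\<^sup>+ \<omega>. ennreal ((frob_norm (H \<omega>))\<^sup>2) \<partial>M) < \<infinity>"
    and "absolutely_continuous lborel (distr M borel H)"
    and "\<rho> > 0"
  shows "\<forall>R::real. R \<ge> 0 \<longrightarrow>
    (\<exists>Q0\<in>U_set \<rho>. measure M {\<omega>\<in>space M. logdet_rate (H \<omega>) Q0 < R}
        = (INF Q\<in>U_set \<rho>. measure M {\<omega>\<in>space M. logdet_rate (H \<omega>) Q < R}))"
proof (intro allI impI)
  fix R :: real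
  interpret prob_space M by fact
  let ?g = "\<lambda>\<omega> Q. Re (det (mat 1 + conj_transpose (H \<omega>) ** Q ** H \<omega>))"
  have sets: "{\<omega>\<in>space M. ?g \<omega> Q \<in> {x. ln x < R}} \<in> sets M" for Q
    using measurable_logdet_rate_less[OF assms(2)] by (simp add: logdet_rate_less_iff)
  have lsc: "measure M {\<omega>\<in>space M. ?g \<omega> l \<in> {x. ln x < R}} \<le> m"
    if "Qs \<longlonglongrightarrow> l" "(\<lambda>n. measure M {\<omega>\<in>space M. ?g \<omega> (Qs n) \<in> {x. ln x < R}}) \<longlonglongrightarrow> m"
    for Qs l m
    by (rule measure_preimage_open_seq_lsc[OF _ open_ln_less sets that]) (intro continuous_intros)
  show "\<exists>Q0\<in>U_set \<rho>. measure M {\<omega>\<in>space M. logdet_rate (H \<omega>) Q0 < R}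
        = (INF Q\<in>U_set \<rho>. measure M {\<omega>\<in>space M. logdet_rate (H \<omega>) Q < R})"
    unfolding logdet_rate_less_iff using zero_in_U_set[of \<rho>] assms(5)
    by (intro compact_attains_Inf_if_seq_lsc compact_U_set lsc) (auto intro: bdd_belowI[of _ 0])
qed

end
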